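(* Let $\mathbb{K}$ be a field with $1+1\neq0$. Any two non-zero symmetric $2\times2$ matrices $P,Q$ over $\mathbb{K}$ with the same determinant are geometrically equivalent over $\mathbb{K}$, i.e. there is $A\in\mathrm{GL}_2(\mathbb{K})$ with $P=A^tQA/|A|$.
   Context: $|A|$ denotes the determinant of $A$ and $\mathrm{GL}_2(\mathbb{K})$ the group of invertible $2\times2$ matrices over $\mathbb{K}$. *)

theory Defs
  imports "HOL-Analysis.Analysis"
begin

end

theory Submission
  imports Defs
begin

text \<open>Write \<open>Q \<cdot> A\<close> for \<open>A\<^sup>t Q A / |A|\<close>. This is a right action of the invertible matrices, and
  in dimension 2 it preserves symmetry and the determinant. A symmetric \<open>Q \<noteq> 0\<close> takes some
  value \<open>v\<^sup>t Q v \<noteq> 0\<close> (here \<open>1 + 1 \<noteq> 0\<close> is needed); moving \<open>v\<close> to the first basis vector and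
  completing the square brings \<open>Q\<close> to \<open>diag(-1, -|Q|)\<close>. So two matrices with the same
  determinant have a common normal form and are equivalent.\<close>

definition geom_act :: "'a::field ^ 'n ^ 'n \<Rightarrow> 'a ^ 'n ^ 'n \<Rightarrow> 'a ^ 'n ^ 'n" where
  "geom_act A Q = (\<chi> i j. ((transpose A ** Q ** A) $ i $ j) / det A)"

definition geom_normal_form :: "'a::field \<Rightarrow> 'a ^ 2 ^ 2" where
  "geom_normal_form d = (\<chi> i j. if i = j then (if i = 1 then -1 else - d) else 0)"

lemma matrix2_eq_iff:
  "(M::'a^2^2) = N \<longleftrightarrow> M$1$1 = N$1$1 \<and> M$1$2 = N$1$2 \<and> M$2$1 = N$2$1 \<and> M$2$2 = N$2$2"
  by (auto simp: vec_eq_iff forall_2)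

lemma matrix_mul_scaled_left:
  "(X::'a::field^'n^'m) ** (\<chi> i j. (M::'a^'k^'n)$i$j / d) = (\<chi> i j. (X ** M)$i$j / d)"
  by (simp add: matrix_matrix_mult_def vec_eq_iff sum_divide_distrib)

lemma matrix_mul_scaled_right:
  "(\<chi> i j. (M::'a::field^'n^'m)$i$j / d) ** (X::'a^'k^'n) = (\<chi> i j. (M ** X)$i$j / d)"
  by (simp add: matrix_matrix_mult_def vec_eq_iff sum_divide_distrib)

lemma geom_act_geom_act: "geom_act A (geom_act B Q) = geom_act (B ** A) Q"
  unfolding geom_act_def matrix_mul_scaled_left matrix_mul_scaled_right
  by (simp add: det_mul matrix_transpose_mul matrix_mul_assoc vec_eq_iff mult.commute)

lemma geom_act_mat_1: "geom_act (mat 1) Q = Q"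
  by (simp add: geom_act_def vec_eq_iff)

lemma geom_act_entries:
  "geom_act B Q = (\<chi> i j. (\<Sum>l\<in>UNIV. \<Sum>k\<in>UNIV. B$k$i * Q$k$l * B$l$j) / det B)"
  by (simp add: geom_act_def matrix_matrix_mult_def transpose_def vec_eq_iff
      sum_distrib_left sum_distrib_right mult.assoc)

lemma transpose_geom_act:
  assumes "transpose Q = Q"
  shows "transpose (geom_act B Q) = geom_act B Q"
proof -
  have "transpose (transpose B ** Q ** B) = transpose B ** Q ** B"
    using assms by (simp add: matrix_transpose_mul matrix_mul_assoc)
  then show ?thesis
    unfolding geom_act_def by (simp add: vec_eq_iff transpose_def)
qed

lemma det_geom_act:
  fixes B Q :: "'a::field^2^2"
  assumes "det B \<noteq> 0"
  shows "det (geom_act B Q) = det Q"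
proof -
  have "det (\<chi> i j. (M::'a^2^2)$i$j / d) = det M / d ^ 2" for M d
    by (simp add: det_2 power2_eq_square diff_divide_distrib)
  then show ?thesis
    using assms by (simp add: geom_act_def det_mul power2_eq_square)
qed

lemma symmetric_matrix2_entries:
  assumes "transpose (Q::'a^2^2) = Q"
  shows "Q$2$1 = Q$1$2"
  using arg_cong[OF assms, of "\<lambda>M. M$1$2"] by (simp add: transpose_def)

text \<open>Completing the square with respect to the first coordinate.\<close>

lemma geom_act_normal_form_of_corner:
  fixes Q :: "'a::field^2^2"
  assumes sym: "transpose Q = Q" and corner: "Q$1$1 \<noteq> 0"
  shows "\<exists>B. det B \<noteq> 0 \<and> geom_act B Q = geom_normal_form (det Q)"
proof -
  define B :: "'a^2^2" where
    "B = (\<chi> i j. if i = 1 then (if j = 1 then 1 else Q$1$2) else (if j = 1 then 0 else - Q$1$1))"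
  have ne: "(1::2) \<noteq> 2" by simp
  have det_B: "det B = - Q$1$1"
    by (simp add: B_def det_2 ne)
  have "geom_act B Q = geom_normal_form (det Q)"
    unfolding geom_act_entries matrix2_eq_iff det_B
    using corner
    by (simp add: B_def ne geom_normal_form_def sum_2 det_2 symmetric_matrix2_entries[OF sym])
      (simp add: field_simps)
  with det_B corner show ?thesis by (intro exI[of _ B]) simp
qed

lemma exists_geom_act_corner_nonzero:
  fixes Q :: "'a::field^2^2"
  assumes two: "(1::'a) + 1 \<noteq> 0" and "Q \<noteq> 0" and sym: "transpose Q = Q"
  shows "\<exists>B. det B \<noteq> 0 \<and> (geom_act B Q)$1$1 \<noteq> 0"
proof -
  have ne: "(1::2) \<noteq> 2" by simp
  have q21: "Q$2$1 = Q$1$2" using symmetric_matrix2_entries[OF sym] .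
  consider "Q$1$1 \<noteq> 0" | "Q$2$2 \<noteq> 0" | "Q$1$1 = 0" "Q$2$2 = 0" "Q$1$2 \<noteq> 0"
    using \<open>Q \<noteq> 0\<close> q21 matrix2_eq_iff[of Q 0] by auto
  then show ?thesis
  proof cases
    case 1
    then show ?thesis by (intro exI[of _ "mat 1"]) (simp add: geom_act_mat_1)
  next
    case 2
    define B :: "'a^2^2" where "B = (\<chi> i j. if i = j then 0 else 1)"
    have "det B = -1" by (simp add: B_def det_2 ne)
    with 2 show ?thesis
      by (intro exI[of _ B]) (simp add: geom_act_entries B_def sum_2 ne)
  next
    case 3
    define B :: "'a^2^2" where "B = (\<chi> i j. if i = 1 \<and> j = 2 then 0 else 1)"
    have "det B = 1" by (simp add: B_def det_2 ne)
    moreover have "(1 + 1) * Q$1$2 \<noteq> 0" using two 3 by simp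
    ultimately show ?thesis
      using 3 by (intro exI[of _ B]) (simp add: geom_act_entries B_def sum_2 ne q21 algebra_simps)
  qed
qed

lemma geom_act_normal_form:
  fixes Q :: "'a::field^2^2"
  assumes "(1::'a) + 1 \<noteq> 0" and "Q \<noteq> 0" and sym: "transpose Q = Q"
  shows "\<exists>B. invertible B \<and> geom_act B Q = geom_normal_form (det Q)"
proof -
  obtain B where B: "det B \<noteq> 0" "(geom_act B Q)$1$1 \<noteq> 0"
    using exists_geom_act_corner_nonzero[OF assms] by blast
  obtain C where C: "det C \<noteq> 0" "geom_act C (geom_act B Q) = geom_normal_form (det (geom_act B Q))"
    using geom_act_normal_form_of_corner[OF transpose_geom_act[OF sym] B(2)] by blast
  have "geom_act (B ** C) Q = geom_normal_form (det Q)"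
    using C(2) by (simp add: geom_act_geom_act det_geom_act[OF B(1)])
  moreover have "invertible (B ** C)"
    using B(1) C(1) by (simp add: invertible_det_nz det_mul)
  ultimately show ?thesis by blast
qed

theorem theorem5p12:
  fixes P Q :: "'a::field ^ 2 ^ 2"
  assumes "(1::'a) + 1 \<noteq> 0"
    and "P \<noteq> 0" and "Q \<noteq> 0"
    and "transpose P = P" and "transpose Q = Q"
    and "det P = det Q"
  shows "\<exists>A :: 'a ^ 2 ^ 2. invertible A \<and>
           P = (\<chi> i j. ((transpose A ** Q ** A) $ i $ j) / det A)"
proof -
  obtain B where B: "invertible B" "geom_act B P = geom_normal_form (det P)"
    using geom_act_normal_form[OF assms(1,2,4)] by blast
  obtain B' where B': "invertible B'" "geom_act B' Q = geom_normal_form (det Q)"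
    using geom_act_normal_form[OF assms(1,3,5)] by blast
  obtain C where C: "B ** C = mat 1" "C ** B = mat 1"
    using B(1) invertible_def by blast
  have "P = geom_act (B ** C) P"
    by (simp add: C(1) geom_act_mat_1)
  also have "\<dots> = geom_act C (geom_act B' Q)"
    by (simp add: geom_act_geom_act[symmetric] B(2) B'(2) assms(6))
  also have "\<dots> = geom_act (B' ** C) Q"
    by (simp add: geom_act_geom_act)
  finally have "P = geom_act (B' ** C) Q" .
  moreover have "invertible (B' ** C)"
    using B'(1) C invertible_def invertible_mult by blast
  ultimately show ?thesis unfolding geom_act_def by blast
qed

end
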